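(* Let $a\ge0$ and $\mathfrak g=\mathfrak r'_{3,a}$ (basis $\{e_1,e_2,e_3\}$, nonzero brackets $[e_1,e_2]=ae_2-e_3$, $[e_1,e_3]=e_2+ae_3$), and let $\langle\cdot,\cdot\rangle_0$ be the inner product for which $\{e_1,e_2,e_3\}$ is orthonormal. An inner product $\langle\cdot,\cdot\rangle$ on $\mathfrak g$ is a solvsoliton if and only if $[\langle\cdot,\cdot\rangle]=[\langle\cdot,\cdot\rangle_0]$. Moreover, $\langle\cdot,\cdot\rangle_0$ is Einstein.
   Context: An inner product on a solvable Lie algebra $\mathfrak g$ is a solvsoliton if its Ricci operator satisfies $\mathrm{Ric}=cI+D$ for some $c\in\mathbb R$ and $D\in\mathrm{Der}(\mathfrak g)$ (Ricci operator of the metric Lie algebra defined via $2\langle\nabla_XY,Z\rangle=\langle[Z,X],Y\rangle+\langle X,[Z,Y]\rangle+\langle[X,Y],Z\rangle$, $R(X,Y)=[\nabla_X,\nabla_Y]-\nabla_{[X,Y]}$, $\mathrm{Ric}(X)=\sum_iR(X,e_i)e_i$ for an orthonormal basis); it is Einstein if $\mathrm{Ric}=cI$. Two inner products are isometric up to scaling if $\langle\cdot,\cdot\rangle_1=k\langle f\cdot,f\cdot\rangle_2$ for some $k>0$ and Lie algebra automorphism $f$ of $\mathfrak g$; $[\langle\cdot,\cdot\rangle]$ denotes the equivalence class. *)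

theory Defs
  imports "HOL-Analysis.Analysis"
begin

type_synonym vec3 = "real ^ 3"

definition e1 :: vec3 where "e1 = axis 1 1"
definition e2 :: vec3 where "e2 = axis 2 1"
definition e3 :: vec3 where "e3 = axis 3 1"

text \<open>Lie bracket of r'_{3,a}: [e1,e2] = a e2 - e3, [e1,e3] = e2 + a e3, [e2,e3] = 0,
  extended bilinearly and skew-symmetrically.\<close>
definition brk :: "real \<Rightarrow> vec3 \<Rightarrow> vec3 \<Rightarrow> vec3" where
  "brk a x y =
     (x$1 * y$2 - x$2 * y$1) *\<^sub>R (a *\<^sub>R e2 - e3)
   + (x$1 * y$3 - x$3 * y$1) *\<^sub>R (e2 + a *\<^sub>R e3)"

definition is_inner_product :: "(vec3 \<Rightarrow> vec3 \<Rightarrow> real) \<Rightarrow> bool" where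
  "is_inner_product ip \<longleftrightarrow>
     (\<forall>y. linear (\<lambda>x. ip x y)) \<and> (\<forall>x y. ip x y = ip y x) \<and> (\<forall>x. x \<noteq> 0 \<longrightarrow> ip x x > 0)"

definition ip0 :: "vec3 \<Rightarrow> vec3 \<Rightarrow> real" where
  "ip0 x y = x \<bullet> y"

definition is_derivation :: "real \<Rightarrow> (vec3 \<Rightarrow> vec3) \<Rightarrow> bool" where
  "is_derivation a D \<longleftrightarrow> linear D \<and>
     (\<forall>x y. D (brk a x y) = brk a (D x) y + brk a x (D y))"

definition is_automorphism :: "real \<Rightarrow> (vec3 \<Rightarrow> vec3) \<Rightarrow> bool" where
  "is_automorphism a f \<longleftrightarrow> linear f \<and> bij f \<and>
     (\<forall>x y. f (brk a x y) = brk a (f x) (f y))"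

text \<open>Levi-Civita connection via the Koszul formula
  2<nabla_X Y, Z> = <[Z,X],Y> + <X,[Z,Y]> + <[X,Y],Z>.\<close>
definition nabla :: "real \<Rightarrow> (vec3 \<Rightarrow> vec3 \<Rightarrow> real) \<Rightarrow> vec3 \<Rightarrow> vec3 \<Rightarrow> vec3" where
  "nabla a ip X Y = (THE W. \<forall>Z. 2 * ip W Z =
       ip (brk a Z X) Y + ip X (brk a Z Y) + ip (brk a X Y) Z)"

definition curv :: "real \<Rightarrow> (vec3 \<Rightarrow> vec3 \<Rightarrow> real) \<Rightarrow> vec3 \<Rightarrow> vec3 \<Rightarrow> vec3 \<Rightarrow> vec3" where
  "curv a ip X Y W =
     nabla a ip X (nabla a ip Y W) - nabla a ip Y (nabla a ip X W) - nabla a ip (brk a X Y) W"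

definition orthonormal_basis :: "(vec3 \<Rightarrow> vec3 \<Rightarrow> real) \<Rightarrow> (3 \<Rightarrow> vec3) \<Rightarrow> bool" where
  "orthonormal_basis ip u \<longleftrightarrow> (\<forall>i j. ip (u i) (u j) = (if i = j then 1 else 0))"

definition ricci :: "real \<Rightarrow> (vec3 \<Rightarrow> vec3 \<Rightarrow> real) \<Rightarrow> vec3 \<Rightarrow> vec3" where
  "ricci a ip X = (let u = (SOME u. orthonormal_basis ip u) in
     (\<Sum>i\<in>UNIV. curv a ip X (u i) (u i)))"

definition is_solvsoliton :: "real \<Rightarrow> (vec3 \<Rightarrow> vec3 \<Rightarrow> real) \<Rightarrow> bool" where
  "is_solvsoliton a ip \<longleftrightarrow>
     (\<exists>c D. is_derivation a D \<and> (\<forall>X. ricci a ip X = c *\<^sub>R X + D X))"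

definition is_einstein :: "real \<Rightarrow> (vec3 \<Rightarrow> vec3 \<Rightarrow> real) \<Rightarrow> bool" where
  "is_einstein a ip \<longleftrightarrow> (\<exists>c. \<forall>X. ricci a ip X = c *\<^sub>R X)"

definition iso_up_to_scaling :: "real \<Rightarrow> (vec3 \<Rightarrow> vec3 \<Rightarrow> real) \<Rightarrow> (vec3 \<Rightarrow> vec3 \<Rightarrow> real) \<Rightarrow> bool" where
  "iso_up_to_scaling a ip1 ip2 \<longleftrightarrow>
     (\<exists>k f. k > 0 \<and> is_automorphism a f \<and> (\<forall>x y. ip1 x y = k * ip2 (f x) (f y)))"

end

theory Submission
  imports Defs
begin

text \<open>Gram--Schmidt applied to \<open>e\<^sub>2, e\<^sub>3, e\<^sub>1\<close> gives, for any inner product, an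
  orthonormal basis whose last two vectors span the nilradical \<open>span{e\<^sub>2, e\<^sub>3}\<close>. In this basis the
  metric Lie algebra becomes \<open>\<real> \<ltimes>\<^sub>B \<real>\<^sup>2\<close> with its standard inner product, where
  \<open>B = \<alpha> M\<^sup>-\<^sup>1 A M\<close>, \<open>A = (a 1; -1 a)\<close>, so \<open>B\<close> has non-real eigenvalues. The Ricci operator
  of \<open>\<real> \<ltimes>\<^sub>B \<real>\<^sup>2\<close> is explicit, and \<open>Ric - c I\<close> being a derivation forces \<open>B\<close> to be a
  multiple of a rotation. Then \<open>M\<close> is conformal, and a shear along the nilradical composed with a
  scaling is an automorphism carrying the inner product to a multiple of \<open>\<langle>\<cdot>,\<cdot>\<rangle>\<^sub>0\<close>. Conversely,
  for \<open>B\<close> a multiple of a rotation the Ricci operator is \<open>-2 b\<^sup>2 I\<close>, which also gives the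
  Einstein property of \<open>\<langle>\<cdot>,\<cdot>\<rangle>\<^sub>0\<close>.\<close>

text \<open>The notions of \<open>Defs\<close> with the bracket as a parameter, so that they can be transported
  along isomorphisms onto other brackets.\<close>
definition levi_civita ::
    "(vec3 \<Rightarrow> vec3 \<Rightarrow> vec3) \<Rightarrow> (vec3 \<Rightarrow> vec3 \<Rightarrow> real) \<Rightarrow> vec3 \<Rightarrow> vec3 \<Rightarrow> vec3" where
  "levi_civita br ip X Y = (THE W. \<forall>Z. 2 * ip W Z =
       ip (br Z X) Y + ip X (br Z Y) + ip (br X Y) Z)"

definition curvature ::
    "(vec3 \<Rightarrow> vec3 \<Rightarrow> vec3) \<Rightarrow> (vec3 \<Rightarrow> vec3 \<Rightarrow> real) \<Rightarrow> vec3 \<Rightarrow> vec3 \<Rightarrow> vec3 \<Rightarrow> vec3" where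
  "curvature br ip X Y W =
     levi_civita br ip X (levi_civita br ip Y W) - levi_civita br ip Y (levi_civita br ip X W)
     - levi_civita br ip (br X Y) W"

definition ricci_operator ::
    "(vec3 \<Rightarrow> vec3 \<Rightarrow> vec3) \<Rightarrow> (vec3 \<Rightarrow> vec3 \<Rightarrow> real) \<Rightarrow> vec3 \<Rightarrow> vec3" where
  "ricci_operator br ip X = (let u = (SOME u. orthonormal_basis ip u) in
     (\<Sum>i\<in>UNIV. curvature br ip X (u i) (u i)))"

definition is_derivation_of :: "(vec3 \<Rightarrow> vec3 \<Rightarrow> vec3) \<Rightarrow> (vec3 \<Rightarrow> vec3) \<Rightarrow> bool" where
  "is_derivation_of br D \<longleftrightarrow> linear D \<and> (\<forall>x y. D (br x y) = br (D x) y + br x (D y))"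

definition is_solvsoliton_of :: "(vec3 \<Rightarrow> vec3 \<Rightarrow> vec3) \<Rightarrow> (vec3 \<Rightarrow> vec3 \<Rightarrow> real) \<Rightarrow> bool" where
  "is_solvsoliton_of br ip \<longleftrightarrow>
     (\<exists>c D. is_derivation_of br D \<and> (\<forall>X. ricci_operator br ip X = c *\<^sub>R X + D X))"

lemma nabla_eq_levi_civita: "nabla a = levi_civita (brk a)"
  by (intro ext) (simp add: nabla_def levi_civita_def)

lemma ricci_eq_ricci_operator: "ricci a = ricci_operator (brk a)"
  by (intro ext) (simp add: ricci_def ricci_operator_def curv_def curvature_def nabla_eq_levi_civita)

lemma is_solvsoliton_iff: "is_solvsoliton a ip \<longleftrightarrow> is_solvsoliton_of (brk a) ip"
  by (simp add: is_solvsoliton_def is_solvsoliton_of_def is_derivation_of_def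
      is_derivation_def ricci_eq_ricci_operator)

lemma
  assumes "is_inner_product ip"
  shows inner_product_sym: "ip x y = ip y x"
    and inner_product_diff_left: "ip (x - y) z = ip x z - ip y z"
    and inner_product_scaleR_left: "ip (t *\<^sub>R x) z = t * ip x z"
    and inner_product_diff_right: "ip z (x - y) = ip z x - ip z y"
    and inner_product_scaleR_right: "ip z (t *\<^sub>R x) = t * ip z x"
proof -
  have lin: "linear (\<lambda>x. ip x w)" for w
    using assms unfolding is_inner_product_def by blast
  show sym: "ip x y = ip y x" for x y
    using assms unfolding is_inner_product_def by blast
  show "ip (x - y) z = ip x z - ip y z" "ip z (x - y) = ip z x - ip z y"
    "ip (t *\<^sub>R x) z = t * ip x z" "ip z (t *\<^sub>R x) = t * ip z x"
    by (simp_all add: sym[of z] linear_diff[OF lin] linear_scale[OF lin])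
qed

lemma is_inner_product_inner: "is_inner_product (\<bullet>)"
  unfolding is_inner_product_def
  by (simp add: linear_iff inner_add_left inner_add_right inner_commute)

lemma levi_civita_eqI:
  assumes ip: "is_inner_product ip"
    and koszul: "\<And>Z. 2 * ip W Z = ip (br Z X) Y + ip X (br Z Y) + ip (br X Y) Z"
  shows "levi_civita br ip X Y = W"
  unfolding levi_civita_def
proof (rule the_equality)
  fix W' assume W': "\<forall>Z. 2 * ip W' Z = ip (br Z X) Y + ip X (br Z Y) + ip (br X Y) Z"
  have "ip (W' - W) (W' - W) = 0"
    using koszul[of "W' - W"] W'[rule_format, of "W' - W"]
    by (simp add: inner_product_diff_left[OF ip])
  then show "W' = W"
    using ip unfolding is_inner_product_def by (metis less_irrefl right_minus_eq)
qed (use koszul in blast)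

lemma bilinear_expansion:
  fixes C :: "real^'n \<Rightarrow> real^'n \<Rightarrow> 'a::real_vector"
  assumes "bilinear C"
  shows "C x y = (\<Sum>j\<in>UNIV. \<Sum>l\<in>UNIV. (x$j * y$l) *\<^sub>R C (axis j 1) (axis l 1))"
proof -
  have "C x y = C (\<Sum>j\<in>UNIV. x$j *\<^sub>R axis j 1) (\<Sum>l\<in>UNIV. y$l *\<^sub>R axis l 1)"
    using basis_expansion[of x] basis_expansion[of y] by (simp add: scalar_mult_eq_scaleR)
  also have "\<dots> = (\<Sum>(j,l)\<in>UNIV \<times> UNIV. C (x$j *\<^sub>R axis j 1) (y$l *\<^sub>R axis l 1))"
    by (rule bilinear_sum[OF assms])
  also have "\<dots> = (\<Sum>j\<in>UNIV. \<Sum>l\<in>UNIV. (x$j * y$l) *\<^sub>R C (axis j 1) (axis l 1))"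
    by (simp add: sum.cartesian_product bilinear_lmul[OF assms] bilinear_rmul[OF assms] mult.commute)
  finally show ?thesis .
qed

lemma orthonormal_basis_axis: "orthonormal_basis (\<bullet>) (\<lambda>i. axis i 1)"
  by (simp add: orthonormal_basis_def inner_axis_axis)

text \<open>The coordinate matrix of an orthonormal basis is orthogonal.\<close>
lemma sum_orthonormal_basis_bilinear:
  fixes C :: "vec3 \<Rightarrow> vec3 \<Rightarrow> 'a::real_vector"
  assumes C: "bilinear C" and u: "orthonormal_basis (\<bullet>) u"
  shows "(\<Sum>i\<in>UNIV. C (u i) (u i)) = (\<Sum>j\<in>UNIV. C (axis j 1) (axis j 1))"
proof -
  define U :: "real^3^3" where "U = (\<chi> i j. u i $ j)"
  have "U ** transpose U = mat 1"
    using u by (simp add: orthonormal_basis_def vec_eq_iff mat_def U_def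
        matrix_matrix_mult_def transpose_def inner_vec_def)
  then have "transpose U ** U = mat 1"
    using matrix_left_right_inverse by blast
  then have orth: "(\<Sum>i\<in>UNIV. u i $ j * u i $ l) = (if j = l then 1 else 0)" for j l
    by (simp add: vec_eq_iff mat_def U_def matrix_matrix_mult_def transpose_def)
  have "(\<Sum>i\<in>UNIV. C (u i) (u i)) =
      (\<Sum>j\<in>UNIV. \<Sum>l\<in>UNIV. (\<Sum>i\<in>UNIV. u i $ j * u i $ l) *\<^sub>R C (axis j 1) (axis l 1))"
    unfolding bilinear_expansion[OF C, of "u _"] scaleR_sum_left
    by (subst sum.swap, rule sum.cong[OF refl], rule sum.swap)
  also have "\<dots> = (\<Sum>j\<in>UNIV. C (axis j 1) (axis j 1))"
    by (simp add: orth sum_3)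
  finally show ?thesis .
qed

lemma ricci_operator_inner_eq_sum:
  assumes "bilinear (curvature br (\<bullet>) X)" and "orthonormal_basis (\<bullet>) u"
  shows "ricci_operator br (\<bullet>) X = (\<Sum>i\<in>UNIV. curvature br (\<bullet>) X (u i) (u i))"
proof -
  have "orthonormal_basis (\<bullet>) (SOME u. orthonormal_basis (\<bullet>) u)"
    by (metis orthonormal_basis_axis someI_ex)
  then show ?thesis
    unfolding ricci_operator_def Let_def
    by (simp add: sum_orthonormal_basis_bilinear assms)
qed

text \<open>The bracket of \<open>\<real> \<ltimes>\<^sub>B \<real>\<^sup>2\<close>: \<open>ad e\<^sub>1\<close> acts on \<open>span{e\<^sub>2, e\<^sub>3}\<close> by the matrix
  \<open>B = (b\<^sub>1\<^sub>1 b\<^sub>1\<^sub>2; b\<^sub>2\<^sub>1 b\<^sub>2\<^sub>2)\<close> and \<open>span{e\<^sub>2, e\<^sub>3}\<close> is abelian.\<close>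
definition sd_bracket :: "real \<Rightarrow> real \<Rightarrow> real \<Rightarrow> real \<Rightarrow> vec3 \<Rightarrow> vec3 \<Rightarrow> vec3" where
  "sd_bracket b11 b12 b21 b22 x y = vector [0,
     (x$1*y$2 - x$2*y$1)*b11 + (x$1*y$3 - x$3*y$1)*b12,
     (x$1*y$2 - x$2*y$1)*b21 + (x$1*y$3 - x$3*y$1)*b22]"

lemma brk_eq_sd_bracket: "brk a = sd_bracket a 1 (-1) a"
  by (intro ext) (simp add: brk_def sd_bracket_def e1_def e2_def e3_def vec_eq_iff forall_3
      axis_def algebra_simps)

definition sd_connection :: "real \<Rightarrow> real \<Rightarrow> real \<Rightarrow> real \<Rightarrow> vec3 \<Rightarrow> vec3 \<Rightarrow> vec3" where
  "sd_connection b11 b12 b21 b22 X Y = vector [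
     b11*X$2*Y$2 + (b12+b21)/2*(X$2*Y$3 + X$3*Y$2) + b22*X$3*Y$3,
     -b11*X$2*Y$1 + (b12-b21)/2*X$1*Y$3 - (b12+b21)/2*X$3*Y$1,
     -(b12-b21)/2*X$1*Y$2 - (b12+b21)/2*X$2*Y$1 - b22*X$3*Y$1]"

lemma sd_connection_koszul:
  "2 * (sd_connection b11 b12 b21 b22 X Y \<bullet> Z) =
     sd_bracket b11 b12 b21 b22 Z X \<bullet> Y + X \<bullet> sd_bracket b11 b12 b21 b22 Z Y
     + sd_bracket b11 b12 b21 b22 X Y \<bullet> Z"
  by (simp add: sd_connection_def sd_bracket_def inner_vec_def sum_3 field_simps)

lemma levi_civita_sd_bracket:
  "levi_civita (sd_bracket b11 b12 b21 b22) (\<bullet>) X Y = sd_connection b11 b12 b21 b22 X Y"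
  by (rule levi_civita_eqI[OF is_inner_product_inner]) (rule sd_connection_koszul)

lemma linear_sd_connection_left: "linear (\<lambda>X. sd_connection b11 b12 b21 b22 X Y)"
  by (rule linearI) (simp_all add: sd_connection_def vec_eq_iff forall_3 field_simps)

lemma linear_sd_connection_right: "linear (\<lambda>Y. sd_connection b11 b12 b21 b22 X Y)"
  by (rule linearI) (simp_all add: sd_connection_def vec_eq_iff forall_3 field_simps)

lemma linear_sd_bracket_right: "linear (\<lambda>Y. sd_bracket b11 b12 b21 b22 X Y)"
  by (rule linearI) (simp_all add: sd_bracket_def vec_eq_iff forall_3 field_simps)

lemma bilinear_curvature_sd_bracket:
  "bilinear (curvature (sd_bracket b11 b12 b21 b22) (\<bullet>) X)"
  unfolding bilinear_def curvature_def levi_civita_sd_bracket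
proof (intro allI conjI)
  fix Y
  show "linear (\<lambda>W. sd_connection b11 b12 b21 b22 X (sd_connection b11 b12 b21 b22 Y W) -
      sd_connection b11 b12 b21 b22 Y (sd_connection b11 b12 b21 b22 X W) -
      sd_connection b11 b12 b21 b22 (sd_bracket b11 b12 b21 b22 X Y) W)"
    by (intro linear_compose_sub linear_sd_connection_right
        linear_compose[OF linear_sd_connection_right linear_sd_connection_right, unfolded o_def])
next
  fix W
  show "linear (\<lambda>Y. sd_connection b11 b12 b21 b22 X (sd_connection b11 b12 b21 b22 Y W) -
      sd_connection b11 b12 b21 b22 Y (sd_connection b11 b12 b21 b22 X W) -
      sd_connection b11 b12 b21 b22 (sd_bracket b11 b12 b21 b22 X Y) W)"
    by (intro linear_compose_sub linear_sd_connection_left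
        linear_compose[OF linear_sd_connection_left linear_sd_connection_right, unfolded o_def]
        linear_compose[OF linear_sd_bracket_right linear_sd_connection_left, unfolded o_def])
qed

lemma ricci_operator_sd_bracket:
  "ricci_operator (sd_bracket b11 b12 b21 b22) (\<bullet>) X = vector [
     - (b11\<^sup>2 + b22\<^sup>2 + (b12 + b21)\<^sup>2 / 2) * X$1,
     (- b11\<^sup>2 - b11*b22 + (b12\<^sup>2 - b21\<^sup>2) / 2) * X$2 - (b11*b12 + b21*b22) * X$3,
     - (b11*b12 + b21*b22) * X$2 + (- b11*b22 - b22\<^sup>2 + (b21\<^sup>2 - b12\<^sup>2) / 2) * X$3]"
  unfolding ricci_operator_inner_eq_sum[OF bilinear_curvature_sd_bracket orthonormal_basis_axis]
    curvature_def levi_civita_sd_bracket sum_3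
  by (simp add: sd_connection_def sd_bracket_def axis_def vec_eq_iff forall_3)
    (simp add: field_simps power2_eq_square)

lemma ricci_operator_sd_bracket_conformal:
  "ricci_operator (sd_bracket b k (-k) b) (\<bullet>) X = (-2 * b\<^sup>2) *\<^sub>R X"
  by (simp add: ricci_operator_sd_bracket vec_eq_iff forall_3 algebra_simps power2_eq_square)

lemma is_solvsoliton_of_sd_bracket_conformal: "is_solvsoliton_of (sd_bracket b k (-k) b) (\<bullet>)"
  unfolding is_solvsoliton_of_def is_derivation_of_def
  by (intro exI[of _ "-2 * b\<^sup>2"] exI[of _ "\<lambda>x. 0"])
    (simp add: ricci_operator_sd_bracket_conformal linear_zero sd_bracket_def vec_eq_iff forall_3)

text \<open>The hypotheses say \<open>[S, B] = l B\<close> for the symmetric \<open>S = (p r; r s)\<close> and the matrix \<open>B\<close> of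
  \<open>sd_bracket\<close>, whose eigenvalues are non-real. Then \<open>l = 0\<close>, and a symmetric matrix
  commuting with \<open>B\<close> is scalar.\<close>
lemma symmetric_commutator_eq_smult_imp_scalar:
  fixes b11 b12 b21 b22 p r s l :: real
  assumes E11: "r*(b21-b12) = l*b11" and E22: "r*(b12-b21) = l*b22"
    and E12: "(p-s)*b12 + r*(b22-b11) = l*b12" and E21: "(s-p)*b21 + r*(b11-b22) = l*b21"
    and disc: "(b11-b22)\<^sup>2 + 4*b12*b21 < 0"
  shows "r = 0 \<and> p = s"
proof -
  have "l*((b11-b22)\<^sup>2 + 4*b12*b21)
      = (b11-b22)*(l*b11) - (b11-b22)*(l*b22) + 2*b21*(l*b12) + 2*b12*(l*b21)"
    by (simp add: algebra_simps power2_eq_square)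
  also have "\<dots> = 0"
    unfolding E11[symmetric] E12[symmetric] E21[symmetric] E22[symmetric]
    by (simp add: algebra_simps)
  finally have "l = 0" using disc by simp
  have "b12 - b21 \<noteq> 0"
  proof
    assume "b12 - b21 = 0"
    then have "(b11-b22)\<^sup>2 + 4*b12*b21 = (b11-b22)\<^sup>2 + 4*b12\<^sup>2"
      by (simp add: power2_eq_square)
    with disc show False
      by (metis add_nonneg_nonneg not_le zero_le_power2 mult_nonneg_nonneg zero_le_numeral)
  qed
  moreover have "(p-s)*(b12-b21) = (p-s)*b12 + (s-p)*b21"
    by (simp add: algebra_simps)
  ultimately show ?thesis
    using E12 E21 E22 \<open>l = 0\<close> by auto
qed

text \<open>The hypotheses say that the columns of \<open>B\<close> are orthogonal of equal length, so \<open>B\<close> is a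
  multiple of a rotation or of a reflection; the latter has real eigenvalues.\<close>
lemma conformal_imp_rotation_scaling:
  fixes b11 b12 b21 b22 :: real
  assumes orth: "b11 * b12 + b21 * b22 = 0" and norm: "b11\<^sup>2 - b22\<^sup>2 = b12\<^sup>2 - b21\<^sup>2"
    and disc: "(b11-b22)\<^sup>2 + 4 * b12 * b21 < 0"
  shows "b11 = b22 \<and> b12 = -b21"
proof -
  define u v t w where "u = b11 - b22" and "v = b12 + b21" and "t = b11 + b22" and "w = b12 - b21"
  have uw: "u * w = - (t * v)" and ut: "u * t = w * v"
    using orth norm by (simp_all add: u_def v_def t_def w_def algebra_simps power2_eq_square)
  have "u\<^sup>2 + v\<^sup>2 < w\<^sup>2"
    using disc by (simp add: u_def v_def w_def algebra_simps power2_eq_square)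
  then have "w \<noteq> 0"
    by (metis add_nonneg_nonneg not_less power_zero_numeral zero_le_power2)
  then have pos: "t\<^sup>2 + w\<^sup>2 \<noteq> 0"
    by (simp add: sum_power2_eq_zero_iff)
  have "u * (t\<^sup>2 + w\<^sup>2) = t * (u * t) + w * (u * w)"
    by (simp add: algebra_simps power2_eq_square)
  also have "\<dots> = t * (w * v) + w * (- (t * v))"
    by (simp only: ut uw)
  also have "\<dots> = 0"
    by (simp add: algebra_simps)
  finally have "u = 0" using pos by (metis mult_eq_0_iff)
  have "v * (t\<^sup>2 + w\<^sup>2) = t * (t * v) + w * (w * v)"
    by (simp add: algebra_simps power2_eq_square)
  also have "\<dots> = t * (- (u * w)) + w * (u * t)"
    by (simp add: uw ut)
  also have "\<dots> = 0"
    by (simp add: algebra_simps)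
  finally have "v = 0" using pos by (metis mult_eq_0_iff)
  show ?thesis using \<open>u = 0\<close> \<open>v = 0\<close> by (simp add: u_def v_def)
qed

lemma is_solvsoliton_of_sd_bracket_imp_conformal:
  assumes sol: "is_solvsoliton_of (sd_bracket b11 b12 b21 b22) (\<bullet>)"
    and disc: "(b11-b22)\<^sup>2 + 4*b12*b21 < 0"
  shows "b11 = b22 \<and> b12 = -b21"
proof -
  define q where "q = - (b11\<^sup>2 + b22\<^sup>2 + (b12 + b21)\<^sup>2 / 2)"
  define p where "p = - b11\<^sup>2 - b11*b22 + (b12\<^sup>2 - b21\<^sup>2) / 2"
  define r where "r = - (b11*b12 + b21*b22)"
  define s where "s = - b11*b22 - b22\<^sup>2 + (b21\<^sup>2 - b12\<^sup>2) / 2"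
  obtain c D where der: "is_derivation_of (sd_bracket b11 b12 b21 b22) D"
    and ric: "\<And>X. ricci_operator (sd_bracket b11 b12 b21 b22) (\<bullet>) X = c *\<^sub>R X + D X"
    using sol unfolding is_solvsoliton_of_def by blast
  have D: "D z = vector [(q - c) * z$1, (p - c) * z$2 + r * z$3, r * z$2 + (s - c) * z$3]" for z
    using ric[of z] unfolding ricci_operator_sd_bracket q_def p_def r_def s_def
    by (simp add: vec_eq_iff forall_3 algebra_simps)
  have leibniz: "D (sd_bracket b11 b12 b21 b22 x y)
      = sd_bracket b11 b12 b21 b22 (D x) y + sd_bracket b11 b12 b21 b22 x (D y)" for x y
    using der unfolding is_derivation_of_def by blast
  note d12 = leibniz[of "axis 1 1" "axis 2 1"] and d13 = leibniz[of "axis 1 1" "axis 3 1"]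
  have "r = 0 \<and> p = s"
  proof (rule symmetric_commutator_eq_smult_imp_scalar[OF _ _ _ _ disc])
    show "r*(b21-b12) = (q-c)*b11" "(s-p)*b21 + r*(b11-b22) = (q-c)*b21"
      using arg_cong[OF d12, of "\<lambda>v. v$2"] arg_cong[OF d12, of "\<lambda>v. v$3"]
      by (simp_all add: D sd_bracket_def axis_def algebra_simps)
    show "(p-s)*b12 + r*(b22-b11) = (q-c)*b12" "r*(b12-b21) = (q-c)*b22"
      using arg_cong[OF d13, of "\<lambda>v. v$2"] arg_cong[OF d13, of "\<lambda>v. v$3"]
      by (simp_all add: D sd_bracket_def axis_def algebra_simps)
  qed
  then have "b11*b12 + b21*b22 = 0" "b11\<^sup>2 - b22\<^sup>2 = b12\<^sup>2 - b21\<^sup>2"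
    by (auto simp: r_def p_def s_def field_simps)
  then show ?thesis
    using conformal_imp_rotation_scaling disc by blast
qed

lemma is_derivation_of_conj:
  assumes lin: "linear \<phi>" "linear \<psi>" and inv: "\<And>x. \<psi> (\<phi> x) = x" "\<And>y. \<phi> (\<psi> y) = y"
    and hom: "\<And>x y. \<phi> (br1 x y) = br2 (\<phi> x) (\<phi> y)"
    and D: "is_derivation_of br1 D"
  shows "is_derivation_of br2 (\<phi> \<circ> D \<circ> \<psi>)"
  unfolding is_derivation_of_def
proof (intro conjI allI)
  show "linear (\<phi> \<circ> D \<circ> \<psi>)"
    using D lin unfolding is_derivation_of_def by (intro linear_compose) auto
  fix x y
  have "\<psi> (br2 x y) = br1 (\<psi> x) (\<psi> y)"
    by (metis hom inv)
  then show "(\<phi> \<circ> D \<circ> \<psi>) (br2 x y) = br2 ((\<phi> \<circ> D \<circ> \<psi>) x) y + br2 x ((\<phi> \<circ> D \<circ> \<psi>) y)"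
    using D unfolding is_derivation_of_def by (simp add: linear_add[OF lin(1)] hom inv)
qed

lemma is_solvsoliton_of_transfer:
  assumes lin: "linear \<phi>" "linear \<psi>" and inv: "\<And>x. \<psi> (\<phi> x) = x" "\<And>y. \<phi> (\<psi> y) = y"
    and hom: "\<And>x y. \<phi> (br1 x y) = br2 (\<phi> x) (\<phi> y)"
    and ricci: "\<And>X. ricci_operator br1 ip1 X = \<psi> (ricci_operator br2 ip2 (\<phi> X))"
  shows "is_solvsoliton_of br1 ip1 \<longleftrightarrow> is_solvsoliton_of br2 ip2"
proof
  assume "is_solvsoliton_of br1 ip1"
  then obtain c D where D: "is_derivation_of br1 D"
    and ric: "\<And>X. ricci_operator br1 ip1 X = c *\<^sub>R X + D X"
    unfolding is_solvsoliton_of_def by blast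
  have "ricci_operator br2 ip2 Y = c *\<^sub>R Y + (\<phi> \<circ> D \<circ> \<psi>) Y" for Y
    using ricci[of "\<psi> Y"] ric[of "\<psi> Y"]
    by (metis comp_apply inv linear_add[OF lin(1)] linear_scale[OF lin(1)])
  with is_derivation_of_conj[OF lin inv hom D] show "is_solvsoliton_of br2 ip2"
    unfolding is_solvsoliton_of_def by blast
next
  assume "is_solvsoliton_of br2 ip2"
  then obtain c D where D: "is_derivation_of br2 D"
    and ric: "\<And>X. ricci_operator br2 ip2 X = c *\<^sub>R X + D X"
    unfolding is_solvsoliton_of_def by blast
  have hom': "\<psi> (br2 x y) = br1 (\<psi> x) (\<psi> y)" for x y
    by (metis hom inv)
  have "ricci_operator br1 ip1 X = c *\<^sub>R X + (\<psi> \<circ> D \<circ> \<phi>) X" for X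
    using ricci[of X] ric[of "\<phi> X"]
    by (simp add: inv linear_add[OF lin(2)] linear_scale[OF lin(2)])
  with is_derivation_of_conj[OF lin(2,1) inv(2,1) hom' D] show "is_solvsoliton_of br1 ip1"
    unfolding is_solvsoliton_of_def by blast
qed

locale sd_isometric_model =
  fixes br :: "vec3 \<Rightarrow> vec3 \<Rightarrow> vec3" and ip :: "vec3 \<Rightarrow> vec3 \<Rightarrow> real"
    and P Q :: "vec3 \<Rightarrow> vec3" and b11 b12 b21 b22 :: real
  assumes inner_product: "is_inner_product ip"
    and linear_P: "linear P" and linear_Q: "linear Q"
    and Q_P: "\<And>x. Q (P x) = x" and P_Q: "\<And>y. P (Q y) = y"
    and P_hom: "\<And>x y. P (br x y) = sd_bracket b11 b12 b21 b22 (P x) (P y)"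
    and isometry: "\<And>x y. ip x y = P x \<bullet> P y"
begin

lemma levi_civita_transfer:
  "levi_civita br ip X Y = Q (sd_connection b11 b12 b21 b22 (P X) (P Y))"
  by (rule levi_civita_eqI[OF inner_product])
    (simp only: isometry P_Q P_hom sd_connection_koszul)

lemma curvature_transfer:
  "curvature br ip X Y W
     = Q (curvature (sd_bracket b11 b12 b21 b22) (\<bullet>) (P X) (P Y) (P W))"
  unfolding curvature_def levi_civita_transfer levi_civita_sd_bracket P_Q P_hom
  by (simp add: linear_diff[OF linear_Q])

lemma ricci_operator_transfer:
  "ricci_operator br ip X = Q (ricci_operator (sd_bracket b11 b12 b21 b22) (\<bullet>) (P X))"
proof -
  define u where "u = (SOME u. orthonormal_basis ip u)"
  have "orthonormal_basis ip (\<lambda>i. Q (axis i 1))"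
    unfolding orthonormal_basis_def isometry P_Q by (simp add: inner_axis_axis)
  then have "orthonormal_basis ip u"
    unfolding u_def by (metis someI_ex)
  then have Pu: "orthonormal_basis (\<bullet>) (\<lambda>i. P (u i))"
    unfolding orthonormal_basis_def isometry by simp
  have "ricci_operator br ip X
      = Q (\<Sum>i\<in>UNIV. curvature (sd_bracket b11 b12 b21 b22) (\<bullet>) (P X) (P (u i)) (P (u i)))"
    unfolding ricci_operator_def u_def[symmetric] Let_def curvature_transfer
    by (simp add: linear_sum[OF linear_Q] o_def)
  then show ?thesis
    by (simp add: ricci_operator_inner_eq_sum[OF bilinear_curvature_sd_bracket Pu])
qed

lemma solvsoliton_transfer:
  "is_solvsoliton_of br ip \<longleftrightarrow> is_solvsoliton_of (sd_bracket b11 b12 b21 b22) (\<bullet>)"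
  by (rule is_solvsoliton_of_transfer[OF linear_P linear_Q Q_P P_Q P_hom ricci_operator_transfer])

end

lemma orthonormal_basis_coordinates:
  assumes ip: "is_inner_product ip" and u: "orthonormal_basis ip u"
  shows "ip (\<Sum>i\<in>UNIV. p$i *\<^sub>R u i) (\<Sum>j\<in>UNIV. q$j *\<^sub>R u j) = p \<bullet> q"
proof -
  have lin: "linear (\<lambda>x. ip x z)" "linear (\<lambda>x. ip z x)" for z
    using ip by (auto simp: is_inner_product_def inner_product_sym[OF ip, of z])
  have "ip (\<Sum>i\<in>UNIV. p$i *\<^sub>R u i) (\<Sum>j\<in>UNIV. q$j *\<^sub>R u j)
      = (\<Sum>i\<in>UNIV. p$i * ip (u i) (\<Sum>j\<in>UNIV. q$j *\<^sub>R u j))"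
    by (simp add: linear_sum[OF lin(1)] linear_scale[OF lin(1)] o_def)
  also have "\<dots> = (\<Sum>i\<in>UNIV. \<Sum>j\<in>UNIV. p$i * q$j * ip (u i) (u j))"
    by (simp add: linear_sum[OF lin(2)] linear_scale[OF lin(2)] o_def sum_distrib_left mult.assoc)
  also have "\<dots> = p \<bullet> q"
    using u[unfolded orthonormal_basis_def] by (simp add: inner_vec_def sum_3)
  finally show ?thesis .
qed

lemma inner_product_normalize:
  assumes ip: "is_inner_product ip" and "w \<noteq> 0"
  shows "ip ((1 / sqrt (ip w w)) *\<^sub>R w) ((1 / sqrt (ip w w)) *\<^sub>R w) = 1"
proof -
  have "ip w w > 0"
    using assms unfolding is_inner_product_def by blast
  then show ?thesis
    by (simp add: inner_product_scaleR_left[OF ip] inner_product_scaleR_right[OF ip])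
qed

text \<open>Gram--Schmidt applied to \<open>e\<^sub>2, e\<^sub>3, e\<^sub>1\<close>, in this order.\<close>
lemma exists_orthonormal_basis_adapted:
  assumes ip: "is_inner_product ip"
  obtains u where "orthonormal_basis ip u"
    and "u 2 $ 1 = 0" "u 2 $ 3 = 0" "u 3 $ 1 = 0" "u 1 $ 1 \<noteq> 0" "u 2 $ 2 \<noteq> 0" "u 3 $ 3 \<noteq> 0"
proof -
  note ip_simps = inner_product_diff_left[OF ip] inner_product_diff_right[OF ip]
    inner_product_scaleR_left[OF ip] inner_product_scaleR_right[OF ip]
  define nrm where "nrm w = (1 / sqrt (ip w w)) *\<^sub>R w" for w
  have nrm: "ip (nrm w) (nrm w) = 1" if "w \<noteq> 0" for w
    unfolding nrm_def using inner_product_normalize[OF ip that] .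
  have pos: "ip w w > 0" if "w \<noteq> 0" for w
    using ip that unfolding is_inner_product_def by blast
  define u2 where "u2 = nrm (axis 2 1)"
  define w3 where "w3 = axis 3 1 - ip (axis 3 1) u2 *\<^sub>R u2"
  define u3 where "u3 = nrm w3"
  define w1 where "w1 = axis 1 1 - ip (axis 1 1) u2 *\<^sub>R u2 - ip (axis 1 1) u3 *\<^sub>R u3"
  define u1 where "u1 = nrm w1"
  have u2: "u2$1 = 0" "u2$3 = 0" "u2$2 = 1 / sqrt (ip (axis 2 1) (axis 2 1))"
    by (simp_all add: u2_def nrm_def axis_def)
  have w3: "w3$1 = 0" "w3$3 = 1"
    by (simp_all add: w3_def u2 axis_def)
  have u3: "u3$1 = 0" "u3$3 = 1 / sqrt (ip w3 w3)"
    by (simp_all add: u3_def nrm_def w3)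
  have w1: "w1$1 = 1"
    by (simp add: w1_def u2 u3 axis_def)
  have u1: "u1$1 = 1 / sqrt (ip w1 w1)"
    by (simp add: u1_def nrm_def w1)
  have nonzero: "(axis 2 1 :: vec3) \<noteq> 0" "w3 \<noteq> 0" "w1 \<noteq> 0"
    using w3(2) w1 by (auto simp: axis_eq_0_iff)
  then have coords: "u2$1 = 0" "u2$3 = 0" "u3$1 = 0" "u1$1 \<noteq> 0" "u2$2 \<noteq> 0" "u3$3 \<noteq> 0"
    using pos[OF nonzero(1)] pos[OF nonzero(2)] pos[OF nonzero(3)] u1 u2 u3 by auto
  have "ip u2 u2 = 1" "ip u3 u3 = 1" "ip u1 u1 = 1"
    unfolding u1_def u2_def u3_def using nonzero by (simp_all add: nrm)
  moreover have "ip u3 u2 = 0"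
    unfolding u3_def nrm_def w3_def by (simp add: ip_simps \<open>ip u2 u2 = 1\<close>)
  moreover have "ip u1 u2 = 0" "ip u1 u3 = 0"
    unfolding u1_def nrm_def w1_def using \<open>ip u3 u2 = 0\<close> inner_product_sym[OF ip, of u2 u3]
    by (simp_all add: ip_simps \<open>ip u2 u2 = 1\<close> \<open>ip u3 u3 = 1\<close>)
  ultimately have "orthonormal_basis ip (\<lambda>i. if i = 1 then u1 else if i = 2 then u2 else u3)"
    unfolding orthonormal_basis_def by (auto simp: forall_3 inner_product_sym[OF ip])
  with coords show thesis
    using that by simp
qed

text \<open>The matrix with columns \<open>(\<alpha>, \<beta>, \<gamma>)\<close>, \<open>(0, c, 0)\<close>, \<open>(0, d, f)\<close>; for nonzero \<open>\<alpha>, c, f\<close> its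
  last two columns form a basis of the derived algebra \<open>span{e\<^sub>2, e\<^sub>3}\<close>.\<close>
definition adapted_map :: "real \<Rightarrow> real \<Rightarrow> real \<Rightarrow> real \<Rightarrow> real \<Rightarrow> real \<Rightarrow> vec3 \<Rightarrow> vec3" where
  "adapted_map \<alpha> \<beta> \<gamma> c d f p = vector [\<alpha>*p$1, \<beta>*p$1 + c*p$2 + d*p$3, \<gamma>*p$1 + f*p$3]"

lemma exists_orthonormal_adapted_map:
  assumes ip: "is_inner_product ip"
  obtains \<alpha> \<beta> \<gamma> c d f where "\<alpha> \<noteq> 0" "c \<noteq> 0" "f \<noteq> 0"
    and "\<And>p q. ip (adapted_map \<alpha> \<beta> \<gamma> c d f p) (adapted_map \<alpha> \<beta> \<gamma> c d f q) = p \<bullet> q"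
proof -
  obtain u where onb: "orthonormal_basis ip u"
    and coords: "u 2 $ 1 = 0" "u 2 $ 3 = 0" "u 3 $ 1 = 0" "u 1 $ 1 \<noteq> 0" "u 2 $ 2 \<noteq> 0" "u 3 $ 3 \<noteq> 0"
    using exists_orthonormal_basis_adapted[OF ip] by blast
  have coordinates: "adapted_map (u 1 $ 1) (u 1 $ 2) (u 1 $ 3) (u 2 $ 2) (u 3 $ 2) (u 3 $ 3) p
      = (\<Sum>i\<in>UNIV. p$i *\<^sub>R u i)" for p
    using coords by (simp add: adapted_map_def sum_3 vec_eq_iff forall_3 algebra_simps)
  show thesis
  proof (rule that[OF coords(4-6)])
    show "ip (adapted_map (u 1 $ 1) (u 1 $ 2) (u 1 $ 3) (u 2 $ 2) (u 3 $ 2) (u 3 $ 3) p)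
        (adapted_map (u 1 $ 1) (u 1 $ 2) (u 1 $ 3) (u 2 $ 2) (u 3 $ 2) (u 3 $ 3) q) = p \<bullet> q" for p q
      unfolding coordinates by (rule orthonormal_basis_coordinates[OF ip onb])
  qed
qed

definition adapted_map_inv :: "real \<Rightarrow> real \<Rightarrow> real \<Rightarrow> real \<Rightarrow> real \<Rightarrow> real \<Rightarrow> vec3 \<Rightarrow> vec3" where
  "adapted_map_inv \<alpha> \<beta> \<gamma> c d f x = vector [x$1/\<alpha>,
     (x$2 - \<beta>*(x$1/\<alpha>) - d*((x$3 - \<gamma>*(x$1/\<alpha>))/f))/c, (x$3 - \<gamma>*(x$1/\<alpha>))/f]"

lemma linear_adapted_map: "linear (adapted_map \<alpha> \<beta> \<gamma> c d f)"
  by (rule linearI) (simp_all add: adapted_map_def vec_eq_iff forall_3 field_simps)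

lemma
  assumes "\<alpha> \<noteq> 0" "c \<noteq> 0" "f \<noteq> 0"
  shows linear_adapted_map_inv: "linear (adapted_map_inv \<alpha> \<beta> \<gamma> c d f)"
    and adapted_map_inv_left: "adapted_map_inv \<alpha> \<beta> \<gamma> c d f (adapted_map \<alpha> \<beta> \<gamma> c d f p) = p"
    and adapted_map_inv_right: "adapted_map \<alpha> \<beta> \<gamma> c d f (adapted_map_inv \<alpha> \<beta> \<gamma> c d f x) = x"
  using assms
  by (auto intro!: linearI simp: adapted_map_def adapted_map_inv_def vec_eq_iff forall_3
      field_simps)

text \<open>In the adapted basis, \<open>ad e\<^sub>1\<close> on the derived algebra becomes \<open>\<alpha> M\<^sup>-\<^sup>1 A M\<close> with
  \<open>A = (a 1; -1 a)\<close> and \<open>M = (c d; 0 f)\<close>.\<close>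
lemma brk_adapted_map:
  assumes "c \<noteq> 0" "f \<noteq> 0"
  shows "brk a (adapted_map \<alpha> \<beta> \<gamma> c d f p) (adapted_map \<alpha> \<beta> \<gamma> c d f q)
    = adapted_map \<alpha> \<beta> \<gamma> c d f
        (sd_bracket (\<alpha>*(a + d/f)) (\<alpha>*(f*f + d*d)/(c*f)) (-\<alpha>*c/f) (\<alpha>*(a - d/f)) p q)"
  using assms unfolding brk_eq_sd_bracket
  by (simp add: adapted_map_def sd_bracket_def vec_eq_iff forall_3 field_simps)

lemma sd_isometric_model_adapted_map:
  assumes ip: "is_inner_product ip" and nz: "\<alpha> \<noteq> 0" "c \<noteq> 0" "f \<noteq> 0"
    and orth: "\<And>p q. ip (adapted_map \<alpha> \<beta> \<gamma> c d f p) (adapted_map \<alpha> \<beta> \<gamma> c d f q) = p \<bullet> q"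
  shows "sd_isometric_model (brk a) ip (adapted_map_inv \<alpha> \<beta> \<gamma> c d f) (adapted_map \<alpha> \<beta> \<gamma> c d f)
    (\<alpha>*(a + d/f)) (\<alpha>*(f*f + d*d)/(c*f)) (-\<alpha>*c/f) (\<alpha>*(a - d/f))"
proof (rule sd_isometric_model.intro)
  note inv = adapted_map_inv_left[OF nz] adapted_map_inv_right[OF nz]
  show "adapted_map_inv \<alpha> \<beta> \<gamma> c d f (brk a x y)
      = sd_bracket (\<alpha>*(a + d/f)) (\<alpha>*(f*f + d*d)/(c*f)) (-\<alpha>*c/f) (\<alpha>*(a - d/f))
          (adapted_map_inv \<alpha> \<beta> \<gamma> c d f x) (adapted_map_inv \<alpha> \<beta> \<gamma> c d f y)" for x y
    by (metis brk_adapted_map[OF nz(2,3)] inv)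
  show "ip x y = adapted_map_inv \<alpha> \<beta> \<gamma> c d f x \<bullet> adapted_map_inv \<alpha> \<beta> \<gamma> c d f y" for x y
    by (metis orth inv)
qed (use ip linear_adapted_map linear_adapted_map_inv[OF nz] adapted_map_inv_left[OF nz]
       adapted_map_inv_right[OF nz] in auto)

definition shear_scaling :: "real \<Rightarrow> real \<Rightarrow> real \<Rightarrow> vec3 \<Rightarrow> vec3" where
  "shear_scaling s \<beta> \<gamma> x = vector [x$1, s*x$2 + \<beta>*x$1, s*x$3 + \<gamma>*x$1]"

lemma is_automorphism_shear_scaling:
  assumes "s \<noteq> 0"
  shows "is_automorphism a (shear_scaling s \<beta> \<gamma>)"
  unfolding is_automorphism_def
proof (intro conjI allI)
  show "linear (shear_scaling s \<beta> \<gamma>)"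
    by (rule linearI) (simp_all add: shear_scaling_def vec_eq_iff forall_3 field_simps)
  have "shear_scaling (1/s) (-\<beta>/s) (-\<gamma>/s) \<circ> shear_scaling s \<beta> \<gamma> = id"
    "shear_scaling s \<beta> \<gamma> \<circ> shear_scaling (1/s) (-\<beta>/s) (-\<gamma>/s) = id"
    using assms by (simp_all add: fun_eq_iff shear_scaling_def vec_eq_iff forall_3 field_simps)
  then show "bij (shear_scaling s \<beta> \<gamma>)"
    by (rule o_bij)
  show "shear_scaling s \<beta> \<gamma> (brk a x y) = brk a (shear_scaling s \<beta> \<gamma> x) (shear_scaling s \<beta> \<gamma> y)"
    for x y
    unfolding brk_eq_sd_bracket
    by (simp add: shear_scaling_def sd_bracket_def vec_eq_iff forall_3 field_simps)
qed

text \<open>For \<open>d = 0\<close> and \<open>c\<^sup>2 = f\<^sup>2\<close> the adapted basis is orthogonal with equal lengths up to a shear,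
  which \<open>shear_scaling\<close> undoes.\<close>
lemma shear_scaling_adapted_map:
  assumes "\<alpha> \<noteq> 0" "c \<noteq> 0" "f \<noteq> 0" and cf: "c * c = f * f"
  shows "shear_scaling (\<alpha>/f) (-\<beta>/f) (-\<gamma>/f) (adapted_map \<alpha> \<beta> \<gamma> c 0 f p)
      \<bullet> shear_scaling (\<alpha>/f) (-\<beta>/f) (-\<gamma>/f) (adapted_map \<alpha> \<beta> \<gamma> c 0 f q) = \<alpha>\<^sup>2 * (p \<bullet> q)"
proof -
  have "shear_scaling (\<alpha>/f) (-\<beta>/f) (-\<gamma>/f) (adapted_map \<alpha> \<beta> \<gamma> c 0 f p)
      \<bullet> shear_scaling (\<alpha>/f) (-\<beta>/f) (-\<gamma>/f) (adapted_map \<alpha> \<beta> \<gamma> c 0 f q)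
      = \<alpha>\<^sup>2 * (p$1*q$1 + (c*c)/(f*f) * (p$2*q$2) + p$3*q$3)"
    using assms by (simp add: shear_scaling_def adapted_map_def inner_vec_def sum_3
        field_simps power2_eq_square)
  then show ?thesis
    using assms by (simp add: cf inner_vec_def sum_3)
qed

lemma solvsoliton_imp_iso_up_to_scaling_ip0:
  assumes ip: "is_inner_product ip" and sol: "is_solvsoliton a ip"
  shows "iso_up_to_scaling a ip ip0"
proof -
  obtain \<alpha> \<beta> \<gamma> c d f where nz: "\<alpha> \<noteq> 0" "c \<noteq> 0" "f \<noteq> 0"
    and orth: "\<And>p q. ip (adapted_map \<alpha> \<beta> \<gamma> c d f p) (adapted_map \<alpha> \<beta> \<gamma> c d f q) = p \<bullet> q"
    using exists_orthonormal_adapted_map[OF ip] by metis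
  interpret sd_isometric_model "brk a" ip "adapted_map_inv \<alpha> \<beta> \<gamma> c d f"
    "adapted_map \<alpha> \<beta> \<gamma> c d f" "\<alpha>*(a + d/f)" "\<alpha>*(f*f + d*d)/(c*f)" "-\<alpha>*c/f" "\<alpha>*(a - d/f)"
    by (rule sd_isometric_model_adapted_map[OF ip nz orth])
  text \<open>The discriminant of \<open>\<alpha> M\<^sup>-\<^sup>1 A M\<close> is \<open>\<alpha>\<^sup>2\<close> times that of \<open>A = (a 1; -1 a)\<close>, i.e. \<open>-4\<alpha>\<^sup>2\<close>.\<close>
  have "(\<alpha>*(a + d/f) - \<alpha>*(a - d/f))\<^sup>2 + 4 * (\<alpha>*(f*f + d*d)/(c*f)) * (-\<alpha>*c/f) = -4 * \<alpha>\<^sup>2"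
    using nz by (simp add: field_simps power2_eq_square)
  moreover have "is_solvsoliton_of
      (sd_bracket (\<alpha>*(a + d/f)) (\<alpha>*(f*f + d*d)/(c*f)) (-\<alpha>*c/f) (\<alpha>*(a - d/f))) (\<bullet>)"
    using sol unfolding is_solvsoliton_iff solvsoliton_transfer .
  ultimately have "\<alpha>*(a + d/f) = \<alpha>*(a - d/f) \<and> \<alpha>*(f*f + d*d)/(c*f) = - (-\<alpha>*c/f)"
    using nz by (intro is_solvsoliton_of_sd_bracket_imp_conformal) auto
  with nz have d: "d = 0" and cf: "c * c = f * f"
    by (auto simp: field_simps)
  define G where "G = shear_scaling (\<alpha>/f) (-\<beta>/f) (-\<gamma>/f)"
  have "ip0 (G x) (G y) = \<alpha>\<^sup>2 * ip x y" for x y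
    using shear_scaling_adapted_map[OF nz cf, of \<beta> \<gamma> "adapted_map_inv \<alpha> \<beta> \<gamma> c 0 f x"
        "adapted_map_inv \<alpha> \<beta> \<gamma> c 0 f y"]
    unfolding G_def ip0_def adapted_map_inv_right[OF nz] isometry[unfolded d] .
  then have "ip x y = (1 / \<alpha>\<^sup>2) * ip0 (G x) (G y)" for x y
    using nz by simp
  moreover have "is_automorphism a G"
    using nz by (simp add: G_def is_automorphism_shear_scaling)
  ultimately show ?thesis
    unfolding iso_up_to_scaling_def using nz by (intro exI[of _ "1 / \<alpha>\<^sup>2"] exI[of _ G]) auto
qed

lemma iso_up_to_scaling_ip0_imp_solvsoliton:
  assumes ip: "is_inner_product ip" and iso: "iso_up_to_scaling a ip ip0"
  shows "is_solvsoliton a ip"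
proof -
  obtain k g where k: "k > 0" and aut: "is_automorphism a g"
    and scaled: "\<And>x y. ip x y = k * ip0 (g x) (g y)"
    using iso unfolding iso_up_to_scaling_def by blast
  have lin: "linear g" and "bij g" and hom: "\<And>x y. g (brk a x y) = brk a (g x) (g y)"
    using aut unfolding is_automorphism_def by blast+
  then have inj: "inj g" and surj: "surj g"
    by (simp_all add: bij_is_inj bij_is_surj)
  define r where "r = sqrt k"
  have r: "r > 0" "r * r = k"
    using k by (simp_all add: r_def)
  interpret sd_isometric_model "brk a" ip "\<lambda>x. r *\<^sub>R g x" "\<lambda>y. inv g ((1/r) *\<^sub>R y)"
    "a/r" "1/r" "-(1/r)" "a/r"
  proof (rule sd_isometric_model.intro)
    show "linear (\<lambda>x. r *\<^sub>R g x)"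
      using lin by (rule linear_compose_scale_right)
    show "linear (\<lambda>y. inv g ((1/r) *\<^sub>R y))"
      using linear_compose[OF linear_scaleR inj_linear_imp_inv_linear[OF lin inj]]
      by (simp add: o_def)
    show "inv g ((1/r) *\<^sub>R (r *\<^sub>R g x)) = x" for x
      using r by (simp add: inv_f_f[OF inj])
    show "r *\<^sub>R g (inv g ((1/r) *\<^sub>R y)) = y" for y
      using r by (simp add: surj_f_inv_f[OF surj])
    show "r *\<^sub>R g (brk a x y) = sd_bracket (a/r) (1/r) (-(1/r)) (a/r) (r *\<^sub>R g x) (r *\<^sub>R g y)"
      for x y
      using r(1) unfolding hom
      by (simp add: brk_eq_sd_bracket sd_bracket_def vec_eq_iff forall_3 field_simps)
    show "ip x y = r *\<^sub>R g x \<bullet> r *\<^sub>R g y" for x y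
      using r(2) by (simp add: scaled ip0_def)
  qed (rule ip)
  show ?thesis
    unfolding is_solvsoliton_iff solvsoliton_transfer
    using is_solvsoliton_of_sd_bracket_conformal[of "a/r" "1/r"] by simp
qed

lemma is_einstein_ip0: "is_einstein a ip0"
proof -
  have "ip0 = (\<bullet>)"
    by (intro ext) (simp add: ip0_def)
  then show ?thesis
    unfolding is_einstein_def ricci_eq_ricci_operator brk_eq_sd_bracket
    by (metis ricci_operator_sd_bracket_conformal)
qed

theorem proposition4p11:
  fixes a :: real
  assumes "a \<ge> 0"
  shows "(\<forall>ip. is_inner_product ip \<longrightarrow>
            (is_solvsoliton a ip \<longleftrightarrow> iso_up_to_scaling a ip ip0))
         \<and> is_einstein a ip0"
  using solvsoliton_imp_iso_up_to_scaling_ip0 iso_up_to_scaling_ip0_imp_solvsoliton is_einstein_ip0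
  by blast

end
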